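(* Let $\Pi\subset\mathbb R^2$ be a convex quadrilateral with counterclockwise extreme points $\mathbf v_1,\dots,\mathbf v_4$. For $\mathbf x\in\Pi$ let $D(\mathbf x)=\big(q(\mathbf x,\mathbf v_i)-w(\mathbf x,\mathbf v_i)\big)_{i=1}^{3}\in\mathbb R^3$ be the G$-$W discrepancy vector. Then any two non-zero vectors $D(\mathbf x),D(\mathbf y)$ ($\mathbf x,\mathbf y\in\Pi$) are parallel.
   Context: Gibbs coordinates $q(\mathbf x,\mathbf v_i)$: the unique probability distribution on the vertices with $\sum_iq(\mathbf x,\mathbf v_i)\mathbf v_i=\mathbf x$ maximizing the entropy $-\sum_i q\log q$ ($0\log0=0$). Wachspress coordinates: with $A(\mathbf p,\mathbf q,\mathbf r)=\tfrac12\det[\mathbf q-\mathbf p,\mathbf r-\mathbf p]$ and indices mod $4$, for interior $\mathbf x$, $w_i(\mathbf x)=A(\mathbf v_{i-1},\mathbf v_i,\mathbf v_{i+1})/(A(\mathbf v_{i-1},\mathbf v_i,\mathbf x)A(\mathbf x,\mathbf v_i,\mathbf v_{i+1}))$ and $w(\mathbf x,\mathbf v_i)=w_i(\mathbf x)/\sum_jw_j(\mathbf x)$; on an edge $[\mathbf v_j,\mathbf v_{j+1}]$ they are the barycentric coordinates with respect to $\mathbf v_j,\mathbf v_{j+1}$ and $0$ elsewhere. *)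

theory Defs
  imports "HOL-Analysis.Analysis"
begin

text \<open>Points of the plane are \<open>real^2\<close>; vertices are indexed by \<open>0..3\<close> (paper: 1..4),
  indices taken mod 4.\<close>

definition area2 :: "real^2 \<Rightarrow> real^2 \<Rightarrow> real^2 \<Rightarrow> real" where
  "area2 p q r = ((q - p)$1 * (r - p)$2 - (q - p)$2 * (r - p)$1) / 2"

definition vtx :: "(nat \<Rightarrow> real^2) \<Rightarrow> nat \<Rightarrow> real^2" where
  "vtx v i = v (i mod 4)"

definition polygon :: "(nat \<Rightarrow> real^2) \<Rightarrow> (real^2) set" where
  "polygon v = convex hull (v ` {0..<4})"

definition ccw_convex_quad :: "(nat \<Rightarrow> real^2) \<Rightarrow> bool" where
  "ccw_convex_quad v \<longleftrightarrow>
     inj_on v {0..<4} \<and>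
     (\<forall>i<4. v i extreme_point_of polygon v) \<and>
     (\<forall>i<4. area2 (vtx v (i + 3)) (vtx v i) (vtx v (i + 1)) > 0)"

definition feasible :: "(nat \<Rightarrow> real^2) \<Rightarrow> real^2 \<Rightarrow> (nat \<Rightarrow> real) \<Rightarrow> bool" where
  "feasible v x q \<longleftrightarrow> (\<forall>i. q i \<ge> 0) \<and> (\<forall>i\<ge>4. q i = 0) \<and>
     (\<Sum>i<4. q i) = 1 \<and> (\<Sum>i<4. q i *\<^sub>R v i) = x"

text \<open>Entropy; note \<open>ln 0 = 0\<close> in Isabelle, so \<open>0 * ln 0 = 0\<close>.\<close>
definition entropy :: "(nat \<Rightarrow> real) \<Rightarrow> real" where
  "entropy q = - (\<Sum>i<4. q i * ln (q i))"

definition gibbs :: "(nat \<Rightarrow> real^2) \<Rightarrow> real^2 \<Rightarrow> nat \<Rightarrow> real" where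
  "gibbs v x = (THE q. feasible v x q \<and> (\<forall>q'. feasible v x q' \<longrightarrow> entropy q' \<le> entropy q))"

definition wach_w :: "(nat \<Rightarrow> real^2) \<Rightarrow> real^2 \<Rightarrow> nat \<Rightarrow> real" where
  "wach_w v x i = area2 (vtx v (i + 3)) (vtx v i) (vtx v (i + 1)) /
     (area2 (vtx v (i + 3)) (vtx v i) x * area2 x (vtx v i) (vtx v (i + 1)))"

definition wach :: "(nat \<Rightarrow> real^2) \<Rightarrow> real^2 \<Rightarrow> nat \<Rightarrow> real" where
  "wach v x i =
    (if x \<in> interior (polygon v) then wach_w v x i / (\<Sum>j<4. wach_w v x j)
     else (let j = (SOME j. j < 4 \<and> x \<in> closed_segment (vtx v j) (vtx v (j + 1))) in
       if i = j then dist x (vtx v (j + 1)) / dist (vtx v j) (vtx v (j + 1))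
       else if i = (j + 1) mod 4 then dist x (vtx v j) / dist (vtx v j) (vtx v (j + 1))
       else 0))"

text \<open>Component \<open>i\<close> (\<open>i < 3\<close>, paper's \<open>i = 1,2,3\<close>) of the G-W discrepancy vector.\<close>
definition discrepancy :: "(nat \<Rightarrow> real^2) \<Rightarrow> real^2 \<Rightarrow> nat \<Rightarrow> real" where
  "discrepancy v x i = gibbs v x i - wach v x i"

end

theory Submission
  imports Defs
begin

(* Gibbs and Wachspress coordinates both reproduce x as an affine combination of the four
   vertices, so their difference is an affine dependence of v 0, ..., v 3.  No three vertices are
   collinear, hence these dependences form a line, spanned by the vector of signed areas given by
   Cramer's rule: every discrepancy vector is a multiple of that one vector.  The distributions reproducing x form
   a compact segment of that line, on which the strictly concave entropy has a unique maximiser.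
   Inside the quadrilateral the Wachspress weights reproduce x by a telescoping identity; a
   boundary point lies on an edge, where they are barycentric coordinates. *)

lemma all_less_four: "(\<forall>i<4. P i) \<longleftrightarrow> P (0::nat) \<and> P 1 \<and> P 2 \<and> P 3"
  by (auto simp: eval_nat_numeral less_Suc_eq)

lemma sum_less_four: "(\<Sum>i<4. f i) = f (0::nat) + f 1 + f 2 + (f 3 :: 'a::comm_monoid_add)"
  by (simp add: eval_nat_numeral ac_simps)

lemma vtx_less_four: "i < 4 \<Longrightarrow> vtx v i = v i"
  by (simp add: vtx_def)

lemma vtx_add_four [simp]: "vtx v (i + 4) = vtx v i" "vtx v (4 + i) = vtx v i"
  by (simp_all add: vtx_def)

lemma vtx_mod_four [simp]: "vtx v (i mod 4) = vtx v i" "vtx v (i mod 4 + 1) = vtx v (i + 1)"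
  by (simp_all add: vtx_def mod_Suc_eq)

section \<open>Signed areas\<close>

lemma area2_cycle: "area2 p q r = area2 q r p"
  by (simp add: area2_def algebra_simps)

lemma area2_degenerate [simp]: "area2 p p q = 0" "area2 p q q = 0" "area2 p q p = 0"
  by (simp_all add: area2_def algebra_simps)

lemma area2_coords: "area2 p q r = (q$1*r$2 - q$2*r$1 - p$1*r$2 + p$2*r$1 + p$1*q$2 - p$2*q$1) / 2"
  by (simp add: area2_def algebra_simps)

definition area2_normal :: "real^2 \<Rightarrow> real^2 \<Rightarrow> real^2" where
  "area2_normal p q = vector [(p$2 - q$2) / 2, (q$1 - p$1) / 2]"

lemma area2_eq_inner: "area2 z p q = inner (area2_normal p q) z + (p$1 * q$2 - p$2 * q$1) / 2"
  by (simp add: area2_def area2_normal_def inner_vec_def sum_2 vector_2 field_simps)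

lemma area2_normal_eq_0_iff: "area2_normal p q = 0 \<longleftrightarrow> p = q"
  by (auto simp: area2_normal_def vec_eq_iff forall_2 vector_2)

lemma area2_halfplanes:
  "{z. 0 \<le> area2 z p q} = {z. inner (area2_normal p q) z \<ge> - (p$1 * q$2 - p$2 * q$1) / 2}"
  "{z. 0 < area2 z p q} = {z. inner (area2_normal p q) z > - (p$1 * q$2 - p$2 * q$1) / 2}"
  by (simp_all only: area2_eq_inner) (rule Collect_cong; linarith)+

lemma convex_area2_halfplane: "convex {z. 0 \<le> area2 z p q}"
  unfolding area2_halfplanes by (rule convex_halfspace_ge)

lemma open_area2_halfplane: "open {z. 0 < area2 z p q}"
  unfolding area2_halfplanes by (rule open_halfspace_gt)

lemma interior_area2_halfplane:
  "p \<noteq> q \<Longrightarrow> interior {z. 0 \<le> area2 z p q} = {z. 0 < area2 z p q}"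
  unfolding area2_halfplanes by (rule interior_halfspace_ge) (simp add: area2_normal_eq_0_iff)

lemma area2_convex_combination:
  assumes "(\<Sum>i\<in>I. l i) = 1"
  shows "area2 (\<Sum>i\<in>I. l i *\<^sub>R p i) a b = (\<Sum>i\<in>I. l i * area2 (p i) a b)"
proof -
  let ?n = "area2_normal a b" and ?c = "(a$1 * b$2 - a$2 * b$1) / 2"
  have "area2 (\<Sum>i\<in>I. l i *\<^sub>R p i) a b = (\<Sum>i\<in>I. l i * inner ?n (p i)) + (\<Sum>i\<in>I. l i) * ?c"
    by (simp add: area2_eq_inner inner_sum_right assms)
  also have "\<dots> = (\<Sum>i\<in>I. l i * (inner ?n (p i) + ?c))"
    by (simp add: sum_distrib_right distrib_left sum.distrib)
  finally show ?thesis
    by (simp only: area2_eq_inner)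
qed

lemma area2_affine_dependence:
  fixes a b c d :: "real^2"
  shows "area2 b c d - area2 a c d + area2 a b d - area2 a b c = 0"
    and "area2 b c d *\<^sub>R a - area2 a c d *\<^sub>R b + area2 a b d *\<^sub>R c - area2 a b c *\<^sub>R d = 0"
  by (simp_all add: area2_def vec_eq_iff forall_2 field_simps)

lemma affine_dependence_eq_multiple:
  fixes p0 p1 p2 p3 :: "real^2"
  assumes "c0 + c1 + c2 + c3 = 0" "c0 *\<^sub>R p0 + c1 *\<^sub>R p1 + c2 *\<^sub>R p2 + c3 *\<^sub>R p3 = 0"
  shows "c1 * area2 p1 p2 p3 = - c0 * area2 p0 p2 p3"
    and "c2 * area2 p1 p2 p3 = c0 * area2 p0 p1 p3"
    and "c3 * area2 p1 p2 p3 = - c0 * area2 p0 p1 p2"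
proof -
  have "c0 * p0$j + c1 * p1$j + c2 * p2$j + c3 * p3$j = 0" for j
    using arg_cong[OF assms(2), of "\<lambda>z. z$j"] by simp
  note coords = this[of 1] this[of 2] assms(1)
  show "c1 * area2 p1 p2 p3 = - c0 * area2 p0 p2 p3"
    using coords unfolding area2_coords by (simp add: field_simps) algebra
  show "c2 * area2 p1 p2 p3 = c0 * area2 p0 p1 p3"
    using coords unfolding area2_coords by (simp add: field_simps) algebra
  show "c3 * area2 p1 p2 p3 = - c0 * area2 p0 p1 p2"
    using coords unfolding area2_coords by (simp add: field_simps) algebra
qed

(* By Cramer's rule for x, p, p', p'', each Wachspress term is a difference of consecutive edge
   terms, so the sum over the polygon telescopes. *)
lemma wachspress_term_telescopes:
  fixes x p p' p'' :: "real^2"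
  assumes "area2 x p p' \<noteq> 0" "area2 x p' p'' \<noteq> 0"
  shows "(area2 p p' p'' / (area2 p p' x * area2 x p' p'')) *\<^sub>R (p' - x)
    = (1 / area2 x p p') *\<^sub>R (p' - p) - (1 / area2 x p' p'') *\<^sub>R (p'' - p')"
proof -
  let ?a = "area2 x p p'" and ?a' = "area2 x p' p''"
  have "area2 p p' p'' *\<^sub>R (p' - x) = ?a' *\<^sub>R (p' - p) - ?a *\<^sub>R (p'' - p')"
    unfolding vec_eq_iff forall_2 by (simp add: area2_def field_simps)
  then have "(1 / (?a * ?a')) *\<^sub>R (area2 p p' p'' *\<^sub>R (p' - x))
      = (1 / (?a * ?a')) *\<^sub>R (?a' *\<^sub>R (p' - p) - ?a *\<^sub>R (p'' - p'))"
    by simp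
  then show ?thesis
    using assms by (simp add: area2_cycle[of x p p', symmetric] scaleR_diff_right)
qed

lemma wach_w_affine_combination:
  assumes "\<forall>j. area2 x (vtx v j) (vtx v (j + 1)) \<noteq> 0"
  shows "(\<Sum>i<4. wach_w v x i *\<^sub>R (v i - x)) = 0"
proof -
  define e where "e j = (1 / area2 x (vtx v j) (vtx v (j + 1))) *\<^sub>R (vtx v (j + 1) - vtx v j)" for j
  have "wach_w v x i *\<^sub>R (v i - x) = e (i + 3) - e i" if "i < 4" for i
    using wachspress_term_telescopes[of x "vtx v (i + 3)" "vtx v i" "vtx v (i + 1)"]
      assms[rule_format, of "i + 3"] assms[rule_format, of i] that
    by (simp add: wach_w_def e_def vtx_less_four add.assoc)
  then have "(\<Sum>i<4. wach_w v x i *\<^sub>R (v i - x)) = (\<Sum>i<4. e (i + 3) - e i)"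
    by simp
  also have "\<dots> = 0"
    by (simp add: sum_less_four e_def vtx_def del: One_nat_def)
  finally show ?thesis .
qed

section \<open>Entropy\<close>

lemma continuous_on_x_ln_x: "continuous_on {0..} (\<lambda>s::real. s * ln s)"
proof -
  have "((\<lambda>s::real. s * ln s) \<longlongrightarrow> 0) (at_right 0)"
  proof -
    have "((\<lambda>y::real. - (ln y / y)) \<longlongrightarrow> 0) at_top"
      using tendsto_minus[OF ln_x_over_x_tendsto_0] by simp
    moreover have "\<forall>\<^sub>F y::real in at_top. - (ln y / y) = inverse y * ln (inverse y)"
      using eventually_gt_at_top[of 0] by eventually_elim (simp add: ln_inverse divide_inverse)
    ultimately have "((\<lambda>y::real. inverse y * ln (inverse y)) \<longlongrightarrow> 0) at_top"
      by (rule Lim_transform_eventually)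
    then show ?thesis
      by (simp add: filterlim_at_right_to_top)
  qed
  moreover have "at (0::real) within {0..} = at_right 0"
  proof -
    have "{0::real..} - {0} = {0<..}"
      by auto
    then show ?thesis
      by (simp add: at_within_def)
  qed
  ultimately have at_0: "continuous (at 0 within {0..}) (\<lambda>s::real. s * ln s)"
    by (simp add: continuous_within)
  show ?thesis
    unfolding continuous_on_eq_continuous_within
  proof
    fix s :: real
    assume "s \<in> {0..}"
    then consider "s = 0" | "0 < s"
      by force
    then show "continuous (at s within {0..}) (\<lambda>s. s * ln s)"
    proof cases
      case 2
      then have "isCont (\<lambda>s. s * ln s) s"
        by (intro continuous_intros) simp
      then show ?thesis
        by (rule continuous_at_imp_continuous_within)
    qed (simp add: at_0)
  qed
qed

lemma x_ln_x_ge_tangent: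
  fixes a m :: real
  assumes "0 \<le> a" "0 < m"
  shows "a * ln m + (a - m) \<le> a * ln a"
    and "a \<noteq> m \<Longrightarrow> a * ln m + (a - m) < a * ln a"
proof -
  have "a * ln m + (a - m) \<le> a * ln a \<and> (a \<noteq> m \<longrightarrow> a * ln m + (a - m) < a * ln a)"
  proof (cases "a = 0")
    case False
    with assms have "0 < a" by simp
    have "a * (ln m - ln a) \<le> m - a" and "a \<noteq> m \<longrightarrow> a * (ln m - ln a) < m - a"
      using mult_left_mono[OF ln_diff_le[OF \<open>0 < m\<close> \<open>0 < a\<close>], of a]
        mult_strict_left_mono[OF ln_diff_less[OF \<open>0 < m\<close> \<open>0 < a\<close>], of a] \<open>0 < a\<close>
      by auto
    then show ?thesis
      by (auto simp: algebra_simps)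
  qed (use assms in simp)
  then show "a * ln m + (a - m) \<le> a * ln a" and "a \<noteq> m \<Longrightarrow> a * ln m + (a - m) < a * ln a"
    by auto
qed

lemma x_ln_x_midpoint_less:
  fixes a b :: real
  assumes "0 \<le> a" "0 \<le> b" "a \<noteq> b"
  shows "(a + b) / 2 * ln ((a + b) / 2) < (a * ln a + b * ln b) / 2"
proof -
  define m where "m = (a + b) / 2"
  have "0 < m" "a \<noteq> m"
    using assms by (auto simp: m_def)
  then have "a * ln m + (a - m) < a * ln a" "b * ln m + (b - m) \<le> b * ln b"
    using x_ln_x_ge_tangent assms by auto
  moreover have "a * ln m + b * ln m = 2 * (m * ln m)"
    by (simp add: m_def algebra_simps)
  ultimately show ?thesis
    by (simp add: m_def field_simps)
qed

lemma entropy_midpoint_gt: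
  assumes "\<forall>i. 0 \<le> q i" "\<forall>i. 0 \<le> r i" "k < 4" "q k \<noteq> r k"
  shows "(entropy q + entropy r) / 2 < entropy (\<lambda>i. (q i + r i) / 2)"
proof -
  have "(\<Sum>i<4. (q i + r i) / 2 * ln ((q i + r i) / 2)) < (\<Sum>i<4. (q i * ln (q i) + r i * ln (r i)) / 2)"
  proof (rule sum_strict_mono_ex1)
    show "\<forall>i\<in>{..<4}. (q i + r i) / 2 * ln ((q i + r i) / 2) \<le> (q i * ln (q i) + r i * ln (r i)) / 2"
    proof
      fix i
      show "(q i + r i) / 2 * ln ((q i + r i) / 2) \<le> (q i * ln (q i) + r i * ln (r i)) / 2"
        using x_ln_x_midpoint_less[of "q i" "r i"] assms(1,2) by (cases "q i = r i") auto
    qed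
    show "\<exists>i\<in>{..<4}. (q i + r i) / 2 * ln ((q i + r i) / 2) < (q i * ln (q i) + r i * ln (r i)) / 2"
      using x_ln_x_midpoint_less assms by blast
  qed simp
  then show ?thesis
    by (simp add: entropy_def sum.distrib flip: sum_divide_distrib)
qed

lemma feasible_midpoint:
  assumes "feasible v x q" "feasible v x r"
  shows "feasible v x (\<lambda>i. (q i + r i) / 2)"
proof -
  have "(\<Sum>i<4. ((q i + r i) / 2) *\<^sub>R v i) = (1 / 2) *\<^sub>R ((\<Sum>i<4. q i *\<^sub>R v i) + (\<Sum>i<4. r i *\<^sub>R v i))"
    by (simp add: scaleR_sum_right sum.distrib[symmetric] algebra_simps add_divide_distrib)
  with assms show ?thesis
    by (simp add: feasible_def sum.distrib add_divide_distrib flip: sum_divide_distrib)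
qed

lemma continuous_on_entropy_line:
  "continuous_on {t. \<forall>i<4. 0 \<le> a i + t * b i} (\<lambda>t. entropy (\<lambda>i. a i + t * b i))"
  unfolding entropy_def
proof (intro continuous_on_minus continuous_on_sum)
  fix i :: nat
  assume "i \<in> {..<4}"
  then have "(\<lambda>t. a i + t * b i) ` {t. \<forall>i<4. 0 \<le> a i + t * b i} \<subseteq> {0..}"
    by auto
  then show "continuous_on {t. \<forall>i<4. 0 \<le> a i + t * b i} (\<lambda>t. (a i + t * b i) * ln (a i + t * b i))"
    by (rule continuous_on_compose2[OF continuous_on_x_ln_x, rotated]) (intro continuous_intros)
qed

section \<open>Counterclockwise quadrilaterals\<close>

(* Cramer's rule: the signed areas of the triangles opposite to each vertex, with alternating
   signs, are the coefficients of an affine dependence of the four vertices. *)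
definition vertex_dependence :: "(nat \<Rightarrow> real^2) \<Rightarrow> nat \<Rightarrow> real" where
  "vertex_dependence v i =
    (if i = 0 then area2 (v 1) (v 2) (v 3) else if i = 1 then - area2 (v 0) (v 2) (v 3)
     else if i = 2 then area2 (v 0) (v 1) (v 3) else if i = 3 then - area2 (v 0) (v 1) (v 2)
     else 0)"

lemma vertex_dependence_sums:
  "(\<Sum>i<4. vertex_dependence v i) = 0" "(\<Sum>i<4. vertex_dependence v i *\<^sub>R v i) = 0"
  using area2_affine_dependence[where a = "v 0" and b = "v 1" and c = "v 2" and d = "v 3"]
  by (simp_all add: sum_less_four vertex_dependence_def)

lemma vertex_dependence_ge_four: "4 \<le> i \<Longrightarrow> vertex_dependence v i = 0"
  by (simp add: vertex_dependence_def)

context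
  fixes v :: "nat \<Rightarrow> real^2"
  assumes ccw: "\<forall>i<4. 0 < area2 (vtx v (i + 3)) (vtx v i) (vtx v (i + 1))"
begin

(* The four triangles of the hypothesis are all the triples of vertices, so every vertex off an
   edge lies strictly to its left. *)
lemma area2_vertices_pos:
  assumes "j < 4" "k < 4" "k \<noteq> j" "k \<noteq> (j + 1) mod 4"
  shows "0 < area2 (v k) (vtx v j) (vtx v (j + 1))"
proof -
  have "0 < area2 (v 3) (v 0) (v 1)" "0 < area2 (v 0) (v 1) (v 2)"
    "0 < area2 (v 1) (v 2) (v 3)" "0 < area2 (v 2) (v 3) (v 0)"
    using ccw unfolding all_less_four vtx_def by (simp_all del: One_nat_def)
  then have "0 < area2 (v 2) (v 0) (v 1)" "0 < area2 (v 3) (v 0) (v 1)"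
    "0 < area2 (v 3) (v 1) (v 2)" "0 < area2 (v 0) (v 1) (v 2)"
    "0 < area2 (v 0) (v 2) (v 3)" "0 < area2 (v 1) (v 2) (v 3)"
    "0 < area2 (v 1) (v 3) (v 0)" "0 < area2 (v 2) (v 3) (v 0)"
    by (metis area2_cycle)+
  moreover have "j = 0 \<or> j = 1 \<or> j = 2 \<or> j = 3" "k = 0 \<or> k = 1 \<or> k = 2 \<or> k = 3"
    using assms(1,2) by auto
  ultimately show ?thesis
    using assms(3,4) unfolding vtx_def by (elim disjE) (simp_all del: One_nat_def)
qed

lemma area2_vertices_nonneg:
  assumes "j < 4" "k < 4"
  shows "0 \<le> area2 (v k) (vtx v j) (vtx v (j + 1))"
  using area2_vertices_pos[OF assms] assms by (cases "k = j \<or> k = (j + 1) mod 4") (auto simp: vtx_def)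

lemma adjacent_vertices_distinct: "vtx v j \<noteq> vtx v (j + 1)"
proof
  define i where "i = j mod 4"
  have "i < 4" "(i + 2) mod 4 \<noteq> i" "(i + 2) mod 4 \<noteq> (i + 1) mod 4"
    unfolding i_def by presburger+
  then have "0 < area2 (v ((i + 2) mod 4)) (vtx v i) (vtx v (i + 1))"
    by (intro area2_vertices_pos) auto
  moreover assume "vtx v j = vtx v (j + 1)"
  then have "vtx v i = vtx v (i + 1)"
    by (simp only: i_def vtx_mod_four)
  ultimately show False
    by simp
qed

lemma vertices_inj: "inj_on v {0..<4}"
proof (rule inj_onI, rule ccontr)
  fix i k
  assume ik: "i \<in> {0..<4}" "k \<in> {0..<4}" "v i = v k" "i \<noteq> k"
  show False
  proof (cases "k = (i + 1) mod 4")
    case True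
    with ik show False
      using adjacent_vertices_distinct[of i] by (simp add: vtx_def)
  next
    case False
    with ik have "0 < area2 (v k) (vtx v i) (vtx v (i + 1))"
      by (intro area2_vertices_pos) auto
    with ik show False
      by (simp add: vtx_def)
  qed
qed

lemma polygon_iff_feasible: "x \<in> polygon v \<longleftrightarrow> (\<exists>q. feasible v x q)"
proof
  assume "x \<in> polygon v"
  then obtain u where u: "\<forall>y\<in>v ` {0..<4}. 0 \<le> u y" "sum u (v ` {0..<4}) = 1"
    "(\<Sum>y\<in>v ` {0..<4}. u y *\<^sub>R y) = x"
    unfolding polygon_def by (subst (asm) convex_hull_finite) auto
  define q where "q i = (if i < 4 then u (v i) else 0)" for i
  have "(\<Sum>i<4. q i) = sum u (v ` {0..<4})" "(\<Sum>i<4. q i *\<^sub>R v i) = (\<Sum>y\<in>v ` {0..<4}. u y *\<^sub>R y)"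
    by (simp_all add: sum.reindex[OF vertices_inj, unfolded atLeast0LessThan] q_def atLeast0LessThan)
  with u have "feasible v x q"
    by (auto simp: feasible_def q_def)
  then show "\<exists>q. feasible v x q" by blast
next
  assume "\<exists>q. feasible v x q"
  then obtain q where q: "feasible v x q" ..
  have "(\<Sum>i<4. q i *\<^sub>R v i) \<in> polygon v"
    unfolding polygon_def
    by (rule convex_sum) (use q in \<open>auto simp: feasible_def intro: hull_inc\<close>)
  with q show "x \<in> polygon v"
    by (simp add: feasible_def)
qed

lemma polygon_subset_halfplane: "polygon v \<subseteq> {z. 0 \<le> area2 z (vtx v j) (vtx v (j + 1))}"
proof -
  have "v ` {0..<4} \<subseteq> {z. 0 \<le> area2 z (vtx v (j mod 4)) (vtx v (j mod 4 + 1))}"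
    using area2_vertices_nonneg[of "j mod 4"] by auto
  then show ?thesis
    unfolding polygon_def vtx_mod_four by (rule hull_minimal) (rule convex_area2_halfplane)
qed

lemma interior_polygon_area2_pos:
  "x \<in> interior (polygon v) \<Longrightarrow> 0 < area2 x (vtx v j) (vtx v (j + 1))"
proof -
  assume "x \<in> interior (polygon v)"
  then have "x \<in> interior {z. 0 \<le> area2 z (vtx v j) (vtx v (j + 1))}"
    using interior_mono[OF polygon_subset_halfplane] by blast
  then show ?thesis
    by (simp only: interior_area2_halfplane[OF adjacent_vertices_distinct] mem_Collect_eq)
qed

lemma wachspress_normalized_feasible:
  assumes pos: "\<forall>j. 0 < area2 x (vtx v j) (vtx v (j + 1))"
  shows "feasible v x (\<lambda>i. if i < 4 then wach_w v x i / (\<Sum>j<4. wach_w v x j) else 0)"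
proof -
  define S where "S = (\<Sum>j<4. wach_w v x j)"
  have "0 < wach_w v x i" if "i < 4" for i
  proof -
    have "0 < area2 (vtx v (i + 3)) (vtx v i) x"
      using pos[rule_format, of "i + 3"] area2_cycle[of x "vtx v (i + 3)" "vtx v i"]
      by (simp add: add.assoc)
    with ccw pos that show ?thesis
      by (simp add: wach_w_def)
  qed
  then have "0 < S"
    unfolding S_def by (intro sum_pos) (auto simp: lessThan_empty_iff)
  have "(\<Sum>i<4. wach_w v x i *\<^sub>R v i) - S *\<^sub>R x = (\<Sum>i<4. wach_w v x i *\<^sub>R (v i - x))"
    by (simp add: S_def scaleR_diff_right sum_subtractf scaleR_sum_left)
  also have "\<dots> = 0"
    using pos by (intro wach_w_affine_combination) (metis less_irrefl)
  finally have "(\<Sum>i<4. wach_w v x i *\<^sub>R v i) = S *\<^sub>R x"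
    by simp
  moreover have "(\<Sum>i<4. (wach_w v x i / S) *\<^sub>R v i) = (1 / S) *\<^sub>R (\<Sum>i<4. wach_w v x i *\<^sub>R v i)"
    by (simp add: scaleR_sum_right)
  ultimately have "(\<Sum>i<4. (wach_w v x i / S) *\<^sub>R v i) = x"
    using \<open>0 < S\<close> by simp
  with \<open>0 < S\<close> \<open>\<And>i. i < 4 \<Longrightarrow> 0 < wach_w v x i\<close> show ?thesis
    by (auto simp: feasible_def S_def[symmetric] less_imp_le simp flip: sum_divide_distrib)
qed

lemma interior_polygon_iff:
  "x \<in> interior (polygon v) \<longleftrightarrow> (\<forall>j. 0 < area2 x (vtx v j) (vtx v (j + 1)))"
proof
  assume pos: "\<forall>j. 0 < area2 x (vtx v j) (vtx v (j + 1))"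
  define U where "U = (\<Inter>j<4. {z. 0 < area2 z (vtx v j) (vtx v (j + 1))})"
  have "U \<subseteq> {z. \<forall>j. 0 < area2 z (vtx v j) (vtx v (j + 1))}"
  proof
    fix z
    assume "z \<in> U"
    then have "0 < area2 z (vtx v (j mod 4)) (vtx v (j mod 4 + 1))" for j
      unfolding U_def by (simp del: vtx_mod_four)
    then show "z \<in> {z. \<forall>j. 0 < area2 z (vtx v j) (vtx v (j + 1))}"
      unfolding vtx_mod_four by blast
  qed
  \<comment> \<open>the Wachspress weights write every point of U as a convex combination of the vertices\<close>
  then have "U \<subseteq> polygon v"
    using wachspress_normalized_feasible polygon_iff_feasible by blast
  moreover have "open U"
    unfolding U_def by (intro open_INT ballI open_area2_halfplane) simp
  moreover have "x \<in> U"
    using pos unfolding U_def by blast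
  ultimately show "x \<in> interior (polygon v)"
    using interior_maximal by blast
qed (use interior_polygon_area2_pos in blast)

lemma on_edge_if_area2_eq_0:
  assumes q: "feasible v x q" and "j < 4" and zero: "area2 x (vtx v j) (vtx v (j + 1)) = 0"
  shows "x \<in> closed_segment (vtx v j) (vtx v (j + 1))"
proof -
  define j' where "j' = (j + 1) mod 4"
  have j: "vtx v j = v j" "vtx v (j + 1) = v j'" "j' < 4" "j \<noteq> j'"
    using \<open>j < 4\<close> unfolding vtx_def j'_def by (simp_all, presburger)
  from q have x: "x = (\<Sum>k<4. q k *\<^sub>R v k)" and sum_q: "(\<Sum>k<4. q k) = 1"
    and q_nonneg: "\<And>k. 0 \<le> q k"
    by (auto simp: feasible_def)
  have "(\<Sum>k<4. q k * area2 (v k) (vtx v j) (vtx v (j + 1))) = 0"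
    using area2_convex_combination[OF sum_q] zero x by simp
  moreover have "0 \<le> q k * area2 (v k) (vtx v j) (vtx v (j + 1))" if "k < 4" for k
    using q_nonneg area2_vertices_nonneg[OF \<open>j < 4\<close> that] by simp
  ultimately have terms_zero: "q k * area2 (v k) (vtx v j) (vtx v (j + 1)) = 0" if "k < 4" for k
    using that by (metis (no_types, lifting) finite_lessThan lessThan_iff sum_nonneg_eq_0_iff)
  have vanish: "q k = 0" if "k < 4" "k \<noteq> j" "k \<noteq> j'" for k
  proof -
    have "0 < area2 (v k) (vtx v j) (vtx v (j + 1))"
      using area2_vertices_pos[OF \<open>j < 4\<close> that(1,2)] that(3) by (simp add: j'_def)
    with terms_zero[OF that(1)] show ?thesis
      by simp
  qed
  have "(\<Sum>k<4. q k *\<^sub>R v k) = (\<Sum>k\<in>{j, j'}. q k *\<^sub>R v k)"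
    by (rule sum.mono_neutral_right) (auto simp: vanish \<open>j < 4\<close> j)
  moreover have "(\<Sum>k<4. q k) = (\<Sum>k\<in>{j, j'}. q k)"
    by (rule sum.mono_neutral_right) (auto simp: vanish \<open>j < 4\<close> j)
  ultimately
  have "x = (1 - q j') *\<^sub>R vtx v j + q j' *\<^sub>R vtx v (j + 1)" "0 \<le> q j'" "q j' \<le> 1"
    using x sum_q j q_nonneg[of j] q_nonneg[of j'] by auto
  then show ?thesis
    unfolding in_segment(1) by blast
qed

lemma boundary_point_on_edge:
  assumes "x \<in> polygon v" "x \<notin> interior (polygon v)"
  shows "\<exists>j<4. x \<in> closed_segment (vtx v j) (vtx v (j + 1))"
proof -
  obtain j where "\<not> 0 < area2 x (vtx v j) (vtx v (j + 1))"
    using assms(2) interior_polygon_iff by blast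
  with assms(1) have "area2 x (vtx v j) (vtx v (j + 1)) = 0"
    using polygon_subset_halfplane[of j] by force
  then have "area2 x (vtx v (j mod 4)) (vtx v (j mod 4 + 1)) = 0"
    by (simp only: vtx_mod_four)
  moreover obtain q where "feasible v x q"
    using assms(1) polygon_iff_feasible by blast
  ultimately have "x \<in> closed_segment (vtx v (j mod 4)) (vtx v (j mod 4 + 1))"
    by (intro on_edge_if_area2_eq_0) simp_all
  then show ?thesis
    by (metis mod_less_divisor zero_less_numeral)
qed

section \<open>Gibbs and Wachspress coordinates\<close>

lemma wach_interior:
  assumes "x \<in> interior (polygon v)"
  shows "(\<Sum>i<4. wach v x i) = 1" "(\<Sum>i<4. wach v x i *\<^sub>R v i) = x"
proof -
  have "feasible v x (\<lambda>i. if i < 4 then wach_w v x i / (\<Sum>j<4. wach_w v x j) else 0)"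
    using assms by (intro wachspress_normalized_feasible) (simp add: interior_polygon_iff)
  moreover have "wach v x i = wach_w v x i / (\<Sum>j<4. wach_w v x j)" for i
    using assms by (simp add: wach_def)
  ultimately show "(\<Sum>i<4. wach v x i) = 1" "(\<Sum>i<4. wach v x i *\<^sub>R v i) = x"
    by (simp_all add: feasible_def)
qed

lemma wach_boundary:
  assumes "x \<in> polygon v" "x \<notin> interior (polygon v)"
  shows "(\<Sum>i<4. wach v x i) = 1" "(\<Sum>i<4. wach v x i *\<^sub>R v i) = x"
proof -
  define j where "j = (SOME j. j < 4 \<and> x \<in> closed_segment (vtx v j) (vtx v (j + 1)))"
  define j' where "j' = (j + 1) mod 4"
  have "j < 4" and seg: "x \<in> closed_segment (vtx v j) (vtx v (j + 1))"
    unfolding j_def using someI_ex[OF boundary_point_on_edge[OF assms]] by blast+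
  then have vj: "vtx v j = v j" "vtx v (j + 1) = v j'" "j' < 4" "j \<noteq> j'"
    unfolding vtx_def j'_def by (simp_all, presburger)
  obtain u where u: "0 \<le> u" "u \<le> 1" "x = (1 - u) *\<^sub>R vtx v j + u *\<^sub>R vtx v (j + 1)"
    using seg unfolding in_segment(1) by blast
  have "x - vtx v (j + 1) = (1 - u) *\<^sub>R (vtx v j - vtx v (j + 1))"
    "x - vtx v j = u *\<^sub>R (vtx v (j + 1) - vtx v j)"
    using u(3) by (simp_all add: algebra_simps)
  then have "dist x (vtx v (j + 1)) = (1 - u) * dist (vtx v j) (vtx v (j + 1))"
      "dist x (vtx v j) = u * dist (vtx v j) (vtx v (j + 1))"
    using u(1,2) by (simp_all add: dist_norm norm_minus_commute)
  moreover have "0 < dist (vtx v j) (vtx v (j + 1))"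
    using adjacent_vertices_distinct by simp
  moreover have "wach v x i = (if i = j then dist x (vtx v (j + 1)) / dist (vtx v j) (vtx v (j + 1))
      else if i = j' then dist x (vtx v j) / dist (vtx v j) (vtx v (j + 1)) else 0)" for i
    using assms(2) unfolding wach_def Let_def j_def[symmetric] j'_def[symmetric] by simp
  ultimately have "wach v x i = (if i = j then 1 - u else 0) + (if i = j' then u else 0)" for i
    using vj(4) by simp
  then show "(\<Sum>i<4. wach v x i) = 1" "(\<Sum>i<4. wach v x i *\<^sub>R v i) = x"
    using u(3) vj \<open>j < 4\<close>
    by (simp_all add: sum.distrib scaleR_add_left if_distrib[of "\<lambda>c. c *\<^sub>R _"] cong: if_cong)
qed

lemma vertex_dependence_signs: "0 < vertex_dependence v 0" "vertex_dependence v 1 < 0"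
proof -
  show "0 < vertex_dependence v 0"
    using area2_vertices_pos[of 1 3]
    by (simp add: vertex_dependence_def vtx_def area2_cycle[of "v 3"] del: One_nat_def)
  show "vertex_dependence v 1 < 0"
    using area2_vertices_pos[of 2 0] by (simp add: vertex_dependence_def vtx_def)
qed

lemma affine_dependence_eq_multiple_vertex_dependence:
  assumes "(\<Sum>i<4. d i) = 0" "(\<Sum>i<4. d i *\<^sub>R v i) = 0"
  shows "\<exists>c. \<forall>i<4. d i = c * vertex_dependence v i"
proof -
  have "0 < area2 (v 1) (v 2) (v 3)"
    using vertex_dependence_signs(1) by (simp add: vertex_dependence_def)
  with assms affine_dependence_eq_multiple[of "d 0" "d 1" "d 2" "d 3" "v 0" "v 1" "v 2" "v 3"]
  show ?thesis
    by (intro exI[of _ "d 0 / area2 (v 1) (v 2) (v 3)"])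
      (auto simp: all_less_four sum_less_four vertex_dependence_def field_simps)
qed

lemma feasible_iff_on_line:
  assumes q0: "feasible v x q0"
  shows "feasible v x q \<longleftrightarrow>
    (\<exists>t. (\<forall>i<4. 0 \<le> q0 i + t * vertex_dependence v i) \<and> q = (\<lambda>i. q0 i + t * vertex_dependence v i))"
proof
  assume q: "feasible v x q"
  have "(\<Sum>i<4. q i - q0 i) = 0" "(\<Sum>i<4. (q i - q0 i) *\<^sub>R v i) = 0"
    using q q0 by (simp_all add: feasible_def sum_subtractf scaleR_diff_left)
  then obtain t where t: "\<forall>i<4. q i - q0 i = t * vertex_dependence v i"
    using affine_dependence_eq_multiple_vertex_dependence by blast
  have "q i = q0 i + t * vertex_dependence v i" for i
    using t q q0 by (cases "i < 4") (auto simp: feasible_def vertex_dependence_ge_four)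
  with q show "\<exists>t. (\<forall>i<4. 0 \<le> q0 i + t * vertex_dependence v i) \<and> q = (\<lambda>i. q0 i + t * vertex_dependence v i)"
    by (auto simp: feasible_def)
next
  assume "\<exists>t. (\<forall>i<4. 0 \<le> q0 i + t * vertex_dependence v i) \<and> q = (\<lambda>i. q0 i + t * vertex_dependence v i)"
  then obtain t where t: "\<forall>i<4. 0 \<le> q0 i + t * vertex_dependence v i"
    and q: "q = (\<lambda>i. q0 i + t * vertex_dependence v i)"
    by blast
  have "0 \<le> q i" for i
    using t q q0 by (cases "i < 4") (auto simp: feasible_def vertex_dependence_ge_four)
  with q0 show "feasible v x q"
    by (simp add: q feasible_def sum.distrib scaleR_add_left vertex_dependence_sums
        vertex_dependence_ge_four flip: sum_distrib_left scaleR_scaleR scaleR_sum_right)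
qed

lemma compact_line_parameters:
  "compact {t. \<forall>i<4. 0 \<le> q0 i + t * vertex_dependence v i}" (is "compact ?T")
proof -
  let ?k = "vertex_dependence v"
  have "?T \<subseteq> {- q0 0 / ?k 0 .. q0 1 / - ?k 1}"
  proof
    fix t
    assume "t \<in> ?T"
    then have "- q0 0 \<le> t * ?k 0" "t * - ?k 1 \<le> q0 1"
      by (auto simp: all_less_four)
    then show "t \<in> {- q0 0 / ?k 0 .. q0 1 / - ?k 1}"
      using vertex_dependence_signs by (simp add: field_simps)
  qed
  moreover have "closed ?T"
    unfolding all_less_four by (intro closed_Collect_conj closed_Collect_le continuous_intros)
  ultimately show ?thesis
    by (meson bounded_closed_interval bounded_subset compact_eq_bounded_closed)
qed

lemma entropy_maximizer_exists:
  assumes "x \<in> polygon v"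
  shows "\<exists>q. feasible v x q \<and> (\<forall>q'. feasible v x q' \<longrightarrow> entropy q' \<le> entropy q)"
proof -
  obtain q0 where q0: "feasible v x q0"
    using assms polygon_iff_feasible by blast
  define T where "T = {t. \<forall>i<4. 0 \<le> q0 i + t * vertex_dependence v i}"
  have "0 \<in> T"
    using q0 by (simp add: T_def feasible_def)
  then obtain tm where tm: "tm \<in> T"
    "\<forall>t\<in>T. entropy (\<lambda>i. q0 i + t * vertex_dependence v i) \<le> entropy (\<lambda>i. q0 i + tm * vertex_dependence v i)"
    using continuous_attains_sup[OF compact_line_parameters _ continuous_on_entropy_line]
    unfolding T_def by blast
  have "feasible v x (\<lambda>i. q0 i + tm * vertex_dependence v i)"
    using tm(1) unfolding feasible_iff_on_line[OF q0] T_def by blast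
  moreover have "entropy q \<le> entropy (\<lambda>i. q0 i + tm * vertex_dependence v i)" if q: "feasible v x q" for q
  proof -
    obtain t where "t \<in> T" "q = (\<lambda>i. q0 i + t * vertex_dependence v i)"
      using q unfolding feasible_iff_on_line[OF q0] T_def by blast
    with tm(2) show ?thesis
      by simp
  qed
  ultimately show ?thesis
    by blast
qed

lemma gibbs_maximizer_unique:
  assumes "x \<in> polygon v"
  shows "\<exists>!q. feasible v x q \<and> (\<forall>q'. feasible v x q' \<longrightarrow> entropy q' \<le> entropy q)"
proof (rule ex_ex1I)
  fix q r
  assume q: "feasible v x q \<and> (\<forall>q'. feasible v x q' \<longrightarrow> entropy q' \<le> entropy q)"
    and r: "feasible v x r \<and> (\<forall>q'. feasible v x q' \<longrightarrow> entropy q' \<le> entropy r)"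
  show "q = r"
  proof (rule ccontr)
    assume "q \<noteq> r"
    then obtain k where "k < 4" "q k \<noteq> r k"
      using q r by (metis ext feasible_def not_le)
    then have "(entropy q + entropy r) / 2 < entropy (\<lambda>i. (q i + r i) / 2)"
      using q r by (intro entropy_midpoint_gt) (auto simp: feasible_def)
    moreover have "entropy (\<lambda>i. (q i + r i) / 2) \<le> entropy q" "entropy (\<lambda>i. (q i + r i) / 2) \<le> entropy r"
      using q r feasible_midpoint by blast+
    ultimately show False
      by simp
  qed
qed (rule entropy_maximizer_exists[OF assms])

lemma gibbs_feasible: "x \<in> polygon v \<Longrightarrow> feasible v x (gibbs v x)"
  unfolding gibbs_def using theI'[OF gibbs_maximizer_unique] by blast

lemma discrepancy_eq_multiple:
  assumes "x \<in> polygon v"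
  shows "\<exists>c. \<forall>i<4. discrepancy v x i = c * vertex_dependence v i"
proof (rule affine_dependence_eq_multiple_vertex_dependence)
  have "(\<Sum>i<4. wach v x i) = 1 \<and> (\<Sum>i<4. wach v x i *\<^sub>R v i) = x"
    using assms wach_interior wach_boundary by (cases "x \<in> interior (polygon v)") auto
  with gibbs_feasible[OF assms]
  show "(\<Sum>i<4. discrepancy v x i) = 0" "(\<Sum>i<4. discrepancy v x i *\<^sub>R v i) = 0"
    by (simp_all add: discrepancy_def feasible_def sum_subtractf scaleR_diff_left)
qed

end

theorem corollary5p9:
  fixes v :: "nat \<Rightarrow> real^2" and x y :: "real^2"
  assumes "ccw_convex_quad v"
    and "x \<in> polygon v" and "y \<in> polygon v"
    and "\<exists>i<3. discrepancy v x i \<noteq> 0"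
    and "\<exists>i<3. discrepancy v y i \<noteq> 0"
  shows "\<exists>c::real. \<forall>i<3. discrepancy v x i = c * discrepancy v y i"
proof -
  have ccw: "\<forall>i<4. 0 < area2 (vtx v (i + 3)) (vtx v i) (vtx v (i + 1))"
    using assms(1) by (simp add: ccw_convex_quad_def)
  obtain cx cy where
    cx: "\<forall>i<4. discrepancy v x i = cx * vertex_dependence v i" and
    cy: "\<forall>i<4. discrepancy v y i = cy * vertex_dependence v i"
    using discrepancy_eq_multiple[OF ccw] assms(2,3) by meson
  have "cy \<noteq> 0"
    using assms(5) cy by auto
  then have "\<forall>i<3. discrepancy v x i = cx / cy * discrepancy v y i"
    using cx cy by simp
  then show ?thesis ..
qed

end
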